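(* Let $X$ be a nonnegative integer-valued random variable whose PGF $X(z)$ has radius of convergence $r>1$, with mean $\mu=X'(1)>0$ and variance $\sigma^2>0$, such that $|X(z)|<X(r_1)$ whenever $|z|=r_1$, $z\ne r_1$, $r_1\in(0,r)$. For positive integers $n,s$ let $A(z)=X(z)^n$, $\mu_A=n\mu<s$, with degree of $X(z)$ larger than $s/n$, and let $Z_0$ be the zero of $z^s-A(z)$ of minimal modulus in $1<|z|<r$. Suppose $\frac{n\mu}{s}=1-\frac{\gamma}{\sqrt s}$ with $\gamma$ bounded away from $0$ and $\infty$ as $s\to\infty$. Then $$-\frac{s-\mu_A}{sZ_0^{s-1}-A'(Z_0)}=\Big(\frac{1}{Z_0}\Big)^{s-1}\big(1+O(s^{-1/2})\big),\qquad s\to\infty.$$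
   Context: $\sigma^2=X''(1)-X'(1)^2+X'(1)$. $O$-terms refer to $s\to\infty$ with constants independent of $s$. *)

theory Defs
  imports "HOL-Probability.Probability"
begin

definition pgf :: "nat pmf \<Rightarrow> complex \<Rightarrow> complex" where
  "pgf P z = (\<Sum>k. complex_of_real (pmf P k) * z ^ k)"

definition pgf_radius :: "nat pmf \<Rightarrow> ereal" where
  "pgf_radius P = conv_radius (\<lambda>k. complex_of_real (pmf P k))"

end

theory Submission
  imports Defs "HOL-Complex_Analysis.Complex_Analysis"
begin

text \<open>Write X(e^u) = exp(\<mu> u + D(u)), where D is the cumulant generating function of X - \<mu>,
  so that D(u) = \<sigma>^2 u^2/2 + O(u^3) and D'(u) = \<sigma>^2 u + O(u^2). A real point e^v is a zero of
  z^s - X(z)^n iff (s - n\<mu>) v = n D(v). Since s - n\<mu> = \<gamma> \<surd>s, the quadratic growth of D yields such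
  a zero with v = O(s^(-1/2)), and the dominance hypothesis forces the zero Z0 of minimal modulus to
  be real: otherwise |Z0|^s = |X(Z0)|^n < X(|Z0|)^n, and the intermediate value theorem gives a
  real zero of smaller modulus. At Z0 = e^v the quotient equals Z0^(1-s) D(v) / (v D'(v) - D(v)),
  and the two Taylor expansions make the last factor 1 + O(v) = 1 + O(s^(-1/2)).\<close>

definition pgf_fps :: "nat pmf \<Rightarrow> complex fps" where
  "pgf_fps P = Abs_fps (\<lambda>k. complex_of_real (pmf P k))"

lemma pgf_fps_nth [simp]: "fps_nth (pgf_fps P) k = complex_of_real (pmf P k)"
  by (simp add: pgf_fps_def)

lemma pgf_eq_eval_fps: "pgf P = eval_fps (pgf_fps P)"
  by (simp add: fun_eq_iff pgf_def eval_fps_def)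

lemma fps_conv_radius_pgf_fps [simp]: "fps_conv_radius (pgf_fps P) = pgf_radius P"
  by (simp add: fps_conv_radius_def pgf_radius_def pgf_fps_def)

lemma sums_expectation_pmf_nat:
  fixes g :: "nat \<Rightarrow> real"
  assumes "summable (\<lambda>k. pmf P k * \<bar>g k\<bar>)"
  shows "integrable (measure_pmf P) g" "(\<lambda>k. pmf P k * g k) sums measure_pmf.expectation P g"
proof -
  have int: "integrable (count_space UNIV) (\<lambda>k. pmf P k * g k)"
    using assms by (simp add: integrable_count_space_nat_iff abs_mult)
  then show "integrable (measure_pmf P) g"
    by (simp add: measure_pmf_eq_density integrable_density)
  have "measure_pmf.expectation P g = (\<integral>k. pmf P k * g k \<partial>count_space UNIV)"
    by (simp add: measure_pmf_eq_density integral_density)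
  with int show "(\<lambda>k. pmf P k * g k) sums measure_pmf.expectation P g"
    by (metis sums_integral_count_space_nat)
qed

lemma eval_fps_of_real_coeffs:
  fixes F :: "complex fps" and a :: "nat \<Rightarrow> real"
  assumes "ereal \<bar>x\<bar> < fps_conv_radius F" "\<And>k. fps_nth F k = of_real (a k)"
  shows "summable (\<lambda>k. \<bar>a k * x ^ k\<bar>)"
    and "(\<lambda>k. a k * x ^ k) sums Re (eval_fps F (of_real x))"
    and "eval_fps F (of_real x) = of_real (Re (eval_fps F (of_real x)))"
proof -
  have F: "summable (\<lambda>k. norm (fps_nth F k * of_real x ^ k))"
    "(\<lambda>k. fps_nth F k * of_real x ^ k) sums eval_fps F (of_real x)"
    using norm_summable_fps[of "of_real x" F] sums_eval_fps[of "of_real x" F] assms(1) by simp_all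
  then show "summable (\<lambda>k. \<bar>a k * x ^ k\<bar>)"
    by (simp add: assms(2) norm_mult norm_power abs_mult power_abs)
  then have "(\<lambda>k. a k * x ^ k) sums (\<Sum>k. a k * x ^ k)"
    by (rule summable_sums[OF summable_rabs_cancel])
  moreover have "(\<lambda>k. complex_of_real (a k * x ^ k)) sums eval_fps F (of_real x)"
    using F(2) by (simp add: assms(2))
  ultimately have "eval_fps F (of_real x) = of_real (\<Sum>k. a k * x ^ k)"
    by (metis sums_of_real sums_unique2)
  with \<open>(\<lambda>k. a k * x ^ k) sums (\<Sum>k. a k * x ^ k)\<close>
  show "(\<lambda>k. a k * x ^ k) sums Re (eval_fps F (of_real x))"
    and "eval_fps F (of_real x) = of_real (Re (eval_fps F (of_real x)))"
    by simp_all
qed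

lemma factorial_moment_series_pgf_fps:
  assumes "pgf_radius P > 1"
  defines "F \<equiv> pgf_fps P"
  shows "pmf P sums Re (eval_fps F 1)" "eval_fps F 1 = of_real (Re (eval_fps F 1))"
    and "(\<lambda>k. pmf P k * real k) sums Re (eval_fps (fps_deriv F) 1)"
      "eval_fps (fps_deriv F) 1 = of_real (Re (eval_fps (fps_deriv F) 1))"
    and "(\<lambda>k. pmf P k * (real k * (real k - 1))) sums Re (eval_fps (fps_deriv (fps_deriv F)) 1)"
      "eval_fps (fps_deriv (fps_deriv F)) 1 = of_real (Re (eval_fps (fps_deriv (fps_deriv F)) 1))"
proof -
  have R0: "ereal \<bar>1\<bar> < fps_conv_radius F" using assms(1) by (simp add: F_def one_ereal_def)
  have R1: "ereal \<bar>1\<bar> < fps_conv_radius (fps_deriv F)" using R0 fps_conv_radius_deriv[of F] by order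
  have R2: "ereal \<bar>1\<bar> < fps_conv_radius (fps_deriv (fps_deriv F))"
    using R1 fps_conv_radius_deriv[of "fps_deriv F"] by order
  show "pmf P sums Re (eval_fps F 1)" "eval_fps F 1 = of_real (Re (eval_fps F 1))"
    using eval_fps_of_real_coeffs[OF R0, of "pmf P"] by (simp_all add: F_def)
  have S1: "(\<lambda>j. real (j + 1) * pmf P (j + 1)) sums Re (eval_fps (fps_deriv F) 1)"
    and "eval_fps (fps_deriv F) 1 = of_real (Re (eval_fps (fps_deriv F) 1))"
    using eval_fps_of_real_coeffs[OF R1, of "\<lambda>j. real (j + 1) * pmf P (j + 1)"] by (simp_all add: F_def)
  then show "eval_fps (fps_deriv F) 1 = of_real (Re (eval_fps (fps_deriv F) 1))" by simp
  show "(\<lambda>k. pmf P k * real k) sums Re (eval_fps (fps_deriv F) 1)"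
    using S1 by (subst sums_zero_iff_shift[of 1, symmetric]) (simp_all add: mult.commute)
  have S2: "(\<lambda>j. real (j + 2) * real (j + 1) * pmf P (j + 2)) sums Re (eval_fps (fps_deriv (fps_deriv F)) 1)"
    and "eval_fps (fps_deriv (fps_deriv F)) 1 = of_real (Re (eval_fps (fps_deriv (fps_deriv F)) 1))"
    using eval_fps_of_real_coeffs[OF R2, of "\<lambda>j. real (j + 2) * real (j + 1) * pmf P (j + 2)"]
    by (simp_all add: F_def algebra_simps)
  then show "eval_fps (fps_deriv (fps_deriv F)) 1 = of_real (Re (eval_fps (fps_deriv (fps_deriv F)) 1))"
    by simp
  show "(\<lambda>k. pmf P k * (real k * (real k - 1))) sums Re (eval_fps (fps_deriv (fps_deriv F)) 1)"
    using S2 by (subst sums_zero_iff_shift[of 2, symmetric]) (auto simp: algebra_simps less_2_cases_iff)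
qed

lemma pgf_fps_derivs_at_1:
  assumes "pgf_radius P > 1"
  defines "\<mu> \<equiv> measure_pmf.expectation P real" and "\<sigma>2 \<equiv> measure_pmf.variance P real"
  shows "eval_fps (pgf_fps P) 1 = 1"
    and "eval_fps (fps_deriv (pgf_fps P)) 1 = of_real \<mu>"
    and "eval_fps (fps_deriv (fps_deriv (pgf_fps P))) 1 = of_real (\<sigma>2 + \<mu>\<^sup>2 - \<mu>)"
proof -
  note S = factorial_moment_series_pgf_fps[OF assms(1)]
  define e2 where "e2 = Re (eval_fps (fps_deriv (fps_deriv (pgf_fps P))) 1)"
  have "(\<lambda>k. pmf P k * 1) sums measure_pmf.expectation P (\<lambda>_. 1::real)"
    using S(1) by (intro sums_expectation_pmf_nat) (auto dest: sums_summable)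
  with S(1,2) show "eval_fps (pgf_fps P) 1 = 1"
    by (simp add: sums_iff)
  have mu: "(\<lambda>k. pmf P k * real k) sums \<mu>" "integrable (measure_pmf P) real"
    unfolding \<mu>_def using S(3) by (auto intro!: sums_expectation_pmf_nat dest: sums_summable)
  have "Re (eval_fps (fps_deriv (pgf_fps P)) 1) = \<mu>"
    using S(3) mu(1) by (rule sums_unique2)
  with S(4) show "eval_fps (fps_deriv (pgf_fps P)) 1 = of_real \<mu>"
    by simp
  from sums_add[OF S(5) mu(1)] have second_moment: "(\<lambda>k. pmf P k * (real k)\<^sup>2) sums (e2 + \<mu>)"
    by (simp add: e2_def algebra_simps power2_eq_square)
  then have "(\<lambda>k. pmf P k * (real k)\<^sup>2) sums measure_pmf.expectation P (\<lambda>k. (real k)\<^sup>2)"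
    and "integrable (measure_pmf P) (\<lambda>k. (real k)\<^sup>2)"
    by (auto intro!: sums_expectation_pmf_nat dest: sums_summable)
  then have "\<sigma>2 = e2 + \<mu> - \<mu>\<^sup>2"
    using measure_pmf.variance_eq[OF mu(2)] second_moment
    by (simp add: \<sigma>2_def \<mu>_def sums_iff)
  with S(6) show "eval_fps (fps_deriv (fps_deriv (pgf_fps P))) 1 = of_real (\<sigma>2 + \<mu>\<^sup>2 - \<mu>)"
    by (simp add: e2_def)
qed

lemma holomorphic_Taylor_remainder_bound:
  assumes "f holomorphic_on S" "open S" "cball w r \<subseteq> S"
  obtains B where "\<And>z. z \<in> cball w r \<Longrightarrow>
    cmod (f z - (\<Sum>i\<le>n. (deriv ^^ i) f w * (z - w) ^ i / fact i)) \<le> B * cmod (z - w) ^ Suc n"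
proof (cases "r < 0")
  case True
  then show ?thesis using that by simp
next
  case False
  have hol: "(deriv ^^ i) f holomorphic_on S" for i
    using assms(1,2) by (rule holomorphic_higher_deriv)
  have "compact ((deriv ^^ Suc n) f ` cball w r)"
    using hol[of "Suc n"] assms(3)
    by (intro compact_continuous_image holomorphic_on_imp_continuous_on) auto
  then obtain B where B: "\<And>x. x \<in> cball w r \<Longrightarrow> cmod ((deriv ^^ Suc n) f x) \<le> B"
    by (meson bounded_iff compact_imp_bounded image_eqI)
  show ?thesis
  proof (rule that[of "B / fact n"])
    fix z assume z: "z \<in> cball w r"
    have "cmod ((deriv ^^ 0) f z - (\<Sum>i\<le>n. (deriv ^^ i) f w * (z - w) ^ i / fact i))
            \<le> B * cmod (z - w) ^ Suc n / fact n"
    proof (rule complex_Taylor[of "cball w r" n "\<lambda>i. (deriv ^^ i) f"])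
      fix i x assume "x \<in> cball w r"
      then show "((deriv ^^ i) f has_field_derivative (deriv ^^ Suc i) f x) (at x within cball w r)"
        using holomorphic_derivI[OF hol assms(2)] assms(3) by auto
    qed (use z False B in auto)
    then show "cmod (f z - (\<Sum>i\<le>n. (deriv ^^ i) f w * (z - w) ^ i / fact i)) \<le> B / fact n * cmod (z - w) ^ Suc n"
      by simp
  qed
qed

lemma has_field_derivative_eval_fps_exp:
  fixes F :: "complex fps"
  assumes "ereal (cmod (exp z)) < fps_conv_radius F"
  shows "((\<lambda>w. eval_fps F (exp w)) has_field_derivative eval_fps (fps_deriv F) (exp z) * exp z) (at z)"
  using DERIV_chain2[OF has_field_derivative_eval_fps[OF assms] DERIV_exp] .

text \<open>The principal logarithm is harmless: near 0 and on the positive real axis,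
  pgf P (exp z) stays off the closed negative real axis.\<close>
definition centered_cgf :: "nat pmf \<Rightarrow> complex \<Rightarrow> complex" where
  "centered_cgf P z = Ln (pgf P (exp z)) - of_real (measure_pmf.expectation P real) * z"

lemma has_field_derivative_centered_cgf:
  assumes "ereal (cmod (exp z)) < pgf_radius P" "pgf P (exp z) \<notin> \<real>\<^sub>\<le>\<^sub>0"
  shows "(centered_cgf P has_field_derivative
           exp z * eval_fps (fps_deriv (pgf_fps P)) (exp z) / pgf P (exp z)
             - of_real (measure_pmf.expectation P real)) (at z)"
proof -
  have "((\<lambda>w. pgf P (exp w)) has_field_derivative eval_fps (fps_deriv (pgf_fps P)) (exp z) * exp z) (at z)"
    using has_field_derivative_eval_fps_exp[of z "pgf_fps P"] assms(1) by (simp add: pgf_eq_eval_fps)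
  from DERIV_chain2[OF has_field_derivative_Ln[OF assms(2)] this]
  have "((\<lambda>w. Ln (pgf P (exp w)) - of_real (measure_pmf.expectation P real) * w) has_field_derivative
          inverse (pgf P (exp z)) * (eval_fps (fps_deriv (pgf_fps P)) (exp z) * exp z)
            - of_real (measure_pmf.expectation P real) * 1) (at z)"
    by (intro DERIV_diff DERIV_cmult DERIV_ident)
  then show ?thesis
    unfolding centered_cgf_def[abs_def] by (rule DERIV_cong) (simp add: field_simps)
qed

lemma deriv_centered_cgf:
  assumes "ereal (cmod (exp z)) < pgf_radius P" "pgf P (exp z) \<notin> \<real>\<^sub>\<le>\<^sub>0"
  shows "exp z * eval_fps (fps_deriv (pgf_fps P)) (exp z)
           = (deriv (centered_cgf P) z + of_real (measure_pmf.expectation P real)) * pgf P (exp z)"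
proof -
  have "pgf P (exp z) \<noteq> 0" using assms(2) by auto
  then show ?thesis
    using DERIV_imp_deriv[OF has_field_derivative_centered_cgf[OF assms]] by (simp add: field_simps)
qed

lemma pgf_of_real_ge_1:
  assumes "1 \<le> x" "ereal x < pgf_radius P"
  obtains y where "1 \<le> y" "pgf P (of_real x) = of_real y"
proof -
  have R: "ereal \<bar>x\<bar> < fps_conv_radius (pgf_fps P)" using assms by simp
  note S = eval_fps_of_real_coeffs[OF R, of "pmf P", simplified]
  have "ereal 1 < pgf_radius P"
    using assms by (meson ereal_less_eq(3) order.strict_trans1)
  then have "pmf P sums 1"
    using eval_fps_of_real_coeffs[of 1 "pgf_fps P" "pmf P"] pgf_fps_derivs_at_1(1)[of P]
    by (simp add: one_ereal_def)
  moreover have "pmf P k \<le> pmf P k * x ^ k" for k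
    using assms(1) by (simp add: mult_le_cancel_left1 pmf_nonneg one_le_power)
  ultimately have "1 \<le> Re (pgf P (of_real x))"
    using S(2) sums_le[of "pmf P"] by (fastforce simp: pgf_eq_eval_fps)
  with S(3) show ?thesis
    using that by (simp add: pgf_eq_eval_fps)
qed

lemma centered_cgf_of_real:
  assumes "0 \<le> u" "ereal (exp u) < pgf_radius P"
  defines "\<mu> \<equiv> measure_pmf.expectation P real"
  shows "centered_cgf P (of_real u) = of_real (Re (centered_cgf P (of_real u)))"
    and "pgf P (of_real (exp u)) = of_real (exp (Re (centered_cgf P (of_real u)) + \<mu> * u))"
    and "pgf P (exp (of_real u)) \<notin> \<real>\<^sub>\<le>\<^sub>0"
proof -
  obtain y where y: "1 \<le> y" "pgf P (of_real (exp u)) = of_real y"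
    using pgf_of_real_ge_1[of "exp u" P] assms(1,2) by auto
  have cgf: "centered_cgf P (of_real u) = of_real (ln y - \<mu> * u)"
    using y by (simp add: centered_cgf_def \<mu>_def exp_of_real Ln_of_real)
  then show "centered_cgf P (of_real u) = of_real (Re (centered_cgf P (of_real u)))"
    by simp
  show "pgf P (of_real (exp u)) = of_real (exp (Re (centered_cgf P (of_real u)) + \<mu> * u))"
    using y by (simp add: cgf)
  show "pgf P (exp (of_real u)) \<notin> \<real>\<^sub>\<le>\<^sub>0"
    using y by (auto simp: exp_of_real nonpos_Reals_def)
qed

lemma centered_cgf_holomorphic_near_0:
  assumes "pgf_radius P > 1"
  obtains \<rho> where "0 < \<rho>"
    and "\<And>z. z \<in> ball 0 \<rho> \<Longrightarrow> ereal (cmod (exp z)) < pgf_radius P \<and> pgf P (exp z) \<notin> \<real>\<^sub>\<le>\<^sub>0"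
    and "centered_cgf P holomorphic_on ball 0 \<rho>"
proof -
  obtain r where r: "1 < r" "ereal r < pgf_radius P"
    using ereal_dense2[OF assms] by (auto simp: one_ereal_def)
  have "isCont (\<lambda>z. pgf P (exp z)) 0"
    using has_field_derivative_eval_fps_exp[of 0 "pgf_fps P"] assms
    by (intro DERIV_isCont) (simp add: pgf_eq_eval_fps one_ereal_def)
  then have "((\<lambda>z. Re (pgf P (exp z))) \<longlongrightarrow> 1) (at 0)"
    using pgf_fps_derivs_at_1(1)[OF assms] tendsto_Re[of "\<lambda>z. pgf P (exp z)" "pgf P 1"]
    by (simp add: isCont_def pgf_eq_eval_fps)
  moreover have "((\<lambda>z. cmod (exp z)) \<longlongrightarrow> 1) (at (0::complex))"
    by (rule tendsto_eq_intros refl | simp)+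
  ultimately have "eventually (\<lambda>z. cmod (exp z) < r \<and> 0 < Re (pgf P (exp z))) (at (0::complex))"
    using r(1) by (intro eventually_conj order_tendstoD(1,2)) (auto simp del: norm_exp_eq_Re)
  moreover have "cmod (exp (0::complex)) < r \<and> 0 < Re (pgf P (exp 0))"
    using r(1) pgf_fps_derivs_at_1(1)[OF assms] by (simp add: pgf_eq_eval_fps)
  ultimately have "eventually (\<lambda>z. cmod (exp z) < r \<and> 0 < Re (pgf P (exp z))) (nhds 0)"
    by (simp add: eventually_nhds_conv_at)
  then obtain \<rho> where \<rho>: "0 < \<rho>" "\<And>z. dist z 0 < \<rho> \<Longrightarrow> cmod (exp z) < r \<and> 0 < Re (pgf P (exp z))"
    unfolding eventually_nhds_metric by auto
  have dom: "ereal (cmod (exp z)) < pgf_radius P \<and> pgf P (exp z) \<notin> \<real>\<^sub>\<le>\<^sub>0" if "z \<in> ball 0 \<rho>" for z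
  proof
    have z: "cmod (exp z) < r" "0 < Re (pgf P (exp z))"
      using \<rho>(2)[of z] that by (simp_all add: dist_commute)
    show "ereal (cmod (exp z)) < pgf_radius P"
      using z(1) r(2) by (meson ereal_less_eq(3) less_imp_le order.strict_trans1)
    show "pgf P (exp z) \<notin> \<real>\<^sub>\<le>\<^sub>0"
      using z(2) by (auto simp: nonpos_Reals_def)
  qed
  have "centered_cgf P holomorphic_on ball 0 \<rho>"
    using dom has_field_derivative_centered_cgf by (subst holomorphic_on_open) blast+
  with \<rho>(1) dom show ?thesis using that by blast
qed

lemma centered_cgf_at_0:
  assumes "pgf_radius P > 1"
  defines "\<sigma>2 \<equiv> measure_pmf.variance P real"
  shows "centered_cgf P 0 = 0" and "deriv (centered_cgf P) 0 = 0"
    and "deriv (deriv (centered_cgf P)) 0 = of_real \<sigma>2"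
proof -
  define \<mu> where "\<mu> = measure_pmf.expectation P real"
  define F where "F = pgf_fps P"
  define D1 where "D1 = (\<lambda>z. exp z * eval_fps (fps_deriv F) (exp z) / eval_fps F (exp z) - of_real \<mu>)"
  note at_1 = pgf_fps_derivs_at_1[OF assms(1), folded F_def \<mu>_def \<sigma>2_def]
  obtain \<rho> where \<rho>: "0 < \<rho>"
    and dom: "\<And>z. z \<in> ball 0 \<rho> \<Longrightarrow> ereal (cmod (exp z)) < pgf_radius P \<and> pgf P (exp z) \<notin> \<real>\<^sub>\<le>\<^sub>0"
    using centered_cgf_holomorphic_near_0[OF assms(1)] by blast
  have deriv_eq: "deriv (centered_cgf P) z = D1 z" if "z \<in> ball 0 \<rho>" for z
    using DERIV_imp_deriv[OF has_field_derivative_centered_cgf] dom[OF that]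
    by (simp add: D1_def F_def \<mu>_def pgf_eq_eval_fps)
  then show "deriv (centered_cgf P) 0 = 0"
    using \<rho> at_1 by (simp add: D1_def)
  show "centered_cgf P 0 = 0"
    using at_1 by (simp add: centered_cgf_def pgf_eq_eval_fps F_def)
  have R: "ereal (cmod (exp (0::complex))) < fps_conv_radius F"
          "ereal (cmod (exp (0::complex))) < fps_conv_radius (fps_deriv F)"
    using assms(1) fps_conv_radius_deriv[of F] by (simp_all add: F_def one_ereal_def)
  have G0: "((\<lambda>z. eval_fps F (exp z)) has_field_derivative eval_fps (fps_deriv F) 1) (at 0)"
    using has_field_derivative_eval_fps_exp[OF R(1)] by simp
  have "((\<lambda>z. exp z * eval_fps (fps_deriv F) (exp z)) has_field_derivative
          eval_fps (fps_deriv F) 1 + eval_fps (fps_deriv (fps_deriv F)) 1) (at 0)"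
    using DERIV_mult[OF DERIV_exp has_field_derivative_eval_fps_exp[OF R(2)]] by simp
  from DERIV_diff[OF DERIV_divide[OF this G0] DERIV_const]
  have "(D1 has_field_derivative
          eval_fps (fps_deriv F) 1 + eval_fps (fps_deriv (fps_deriv F)) 1 - eval_fps (fps_deriv F) 1 ^ 2) (at 0)"
    using at_1(1) by (simp add: D1_def power2_eq_square)
  then have "(D1 has_field_derivative of_real \<sigma>2) (at 0)"
    using at_1 by (simp add: power2_eq_square algebra_simps)
  then have "(deriv (centered_cgf P) has_field_derivative of_real \<sigma>2) (at 0)"
    by (rule has_field_derivative_transform_within_open[of _ _ _ "ball 0 \<rho>"]) (use \<rho> deriv_eq in auto)
  then show "deriv (deriv (centered_cgf P)) 0 = of_real \<sigma>2"
    by (rule DERIV_imp_deriv)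
qed

lemma centered_cgf_Taylor_bounds:
  assumes "pgf_radius P > 1" "0 < \<epsilon>"
  defines "\<sigma>2 \<equiv> measure_pmf.variance P real"
  obtains \<delta> B where "0 < \<delta>" "0 \<le> B" "B * \<delta> \<le> \<epsilon>" "ereal (exp \<delta>) < pgf_radius P"
    and "\<And>z. cmod z \<le> \<delta> \<Longrightarrow> cmod (centered_cgf P z - of_real (\<sigma>2 / 2) * z\<^sup>2) \<le> B * cmod z ^ 3"
    and "\<And>z. cmod z \<le> \<delta> \<Longrightarrow> cmod (deriv (centered_cgf P) z - of_real \<sigma>2 * z) \<le> B * cmod z ^ 2"
proof -
  obtain \<rho> where \<rho>: "0 < \<rho>"
    and dom: "\<And>z. z \<in> ball 0 \<rho> \<Longrightarrow> ereal (cmod (exp z)) < pgf_radius P \<and> pgf P (exp z) \<notin> \<real>\<^sub>\<le>\<^sub>0"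
    and hol: "centered_cgf P holomorphic_on ball 0 \<rho>"
    using centered_cgf_holomorphic_near_0[OF assms(1)] by blast
  have sub: "cball 0 (\<rho> / 2) \<subseteq> ball 0 \<rho>" using \<rho> by auto
  note at_0 = centered_cgf_at_0[OF assms(1), folded \<sigma>2_def]
  obtain B1 where B1: "\<And>z. z \<in> cball 0 (\<rho> / 2) \<Longrightarrow>
      cmod (centered_cgf P z - (\<Sum>i\<le>2. (deriv ^^ i) (centered_cgf P) 0 * (z - 0) ^ i / fact i))
        \<le> B1 * cmod (z - 0) ^ Suc 2"
    using holomorphic_Taylor_remainder_bound[OF hol open_ball sub] by blast
  obtain B2 where B2: "\<And>z. z \<in> cball 0 (\<rho> / 2) \<Longrightarrow>
      cmod (deriv (centered_cgf P) z - (\<Sum>i\<le>1. (deriv ^^ i) (deriv (centered_cgf P)) 0 * (z - 0) ^ i / fact i))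
        \<le> B2 * cmod (z - 0) ^ Suc 1"
    using holomorphic_Taylor_remainder_bound[OF holomorphic_deriv[OF hol open_ball] open_ball sub] by blast
  define B where "B = max (max B1 B2) 0"
  define \<delta> where "\<delta> = min (\<rho> / 2) (\<epsilon> / (B + 1))"
  have "0 \<le> B" by (simp add: B_def)
  have \<delta>: "0 < \<delta>" "\<delta> \<le> \<rho> / 2"
    using \<rho> assms(2) \<open>0 \<le> B\<close> unfolding \<delta>_def by (simp add: add_nonneg_pos) (rule min.cobounded1)
  show ?thesis
  proof (rule that[OF \<delta>(1) \<open>0 \<le> B\<close>])
    have "B * \<delta> \<le> (B + 1) * (\<epsilon> / (B + 1))"
      using \<open>0 \<le> B\<close> \<delta> by (intro mult_mono) (auto simp: \<delta>_def)
    then show "B * \<delta> \<le> \<epsilon>" using \<open>0 \<le> B\<close> by simp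
    show "ereal (exp \<delta>) < pgf_radius P"
      using dom[of "of_real \<delta>"] \<delta> by auto
    fix z :: complex assume "cmod z \<le> \<delta>"
    then have z: "z \<in> cball 0 (\<rho> / 2)" using \<delta>(2) by simp
    have "B1 * cmod z ^ 3 \<le> B * cmod z ^ 3"
      by (intro mult_right_mono) (auto simp: B_def)
    with B1[OF z] show "cmod (centered_cgf P z - of_real (\<sigma>2 / 2) * z\<^sup>2) \<le> B * cmod z ^ 3"
      using at_0 by (simp add: numeral_2_eq_2 numeral_3_eq_3 power2_eq_square mult.commute)
    have "B2 * cmod z ^ 2 \<le> B * cmod z ^ 2"
      by (intro mult_right_mono) (auto simp: B_def)
    with B2[OF z] show "cmod (deriv (centered_cgf P) z - of_real \<sigma>2 * z) \<le> B * cmod z ^ 2"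
      using at_0 by (simp add: numeral_2_eq_2 mult.commute)
  qed
qed

lemma IVT_right_of_0:
  fixes f :: "real \<Rightarrow> real"
  assumes "0 < b" "continuous_on {0..b} f" "f b < 0" "eventually (\<lambda>x. 0 < f x) (at_right 0)"
  shows "\<exists>x. 0 < x \<and> x < b \<and> f x = 0"
proof -
  obtain c where c: "0 < c" "\<And>y. 0 < y \<Longrightarrow> y < c \<Longrightarrow> 0 < f y"
    using assms(4) by (auto simp: eventually_at_right_field)
  define a where "a = min (c / 2) (b / 2)"
  have a: "0 < a" "a < b" "0 < f a" using c assms(1) by (auto simp: a_def)
  have "continuous_on {a..b} f" by (rule continuous_on_subset[OF assms(2)]) (use a in auto)
  then obtain x where "a \<le> x" "x \<le> b" "f x = 0"
    using IVT2'[of f b 0 a] assms(3) a by auto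
  moreover have "x \<noteq> b" using \<open>f x = 0\<close> assms(3) by auto
  ultimately show ?thesis using a by (intro exI[of _ x]) auto
qed

lemma continuous_on_centered_cgf_real:
  assumes "ereal (exp b) < pgf_radius P"
  shows "continuous_on {0..b} (\<lambda>u. Re (centered_cgf P (of_real u)))"
proof (intro continuous_at_imp_continuous_on ballI isCont_Re isCont_o2[OF isCont_of_real])
  fix u assume u: "u \<in> {0..b}"
  then have "ereal (exp u) < pgf_radius P"
    using assms by (meson atLeastAtMost_iff ereal_less_eq(3) exp_le_cancel_iff order.strict_trans1)
  then show "isCont (centered_cgf P) (of_real u)"
    using DERIV_isCont[OF has_field_derivative_centered_cgf[of "of_real u" P]]
      centered_cgf_of_real(3)[of u P] u by simp
qed (intro continuous_intros)

lemma eventually_quadratic_below_linear_at_right_0: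
  fixes d :: "real \<Rightarrow> real"
  assumes "0 < g" "0 < b" "0 \<le> c" "0 \<le> K" "\<And>u. 0 \<le> u \<Longrightarrow> u \<le> b \<Longrightarrow> d u \<le> K * u\<^sup>2"
  shows "eventually (\<lambda>u. c * d u < g * u) (at_right 0)"
proof -
  have "c * d u < g * u" if u: "0 < u" "u < g / (c * K + 1)" "u \<le> b" for u
  proof -
    have "c * d u \<le> (c * K * u) * u"
      using mult_left_mono[OF assms(5)[of u] assms(3)] u by (simp add: power2_eq_square mult_ac)
    also have "\<dots> < g * u"
    proof (rule mult_strict_right_mono)
      have "0 < c * K + 1" using assms(3,4) by (simp add: add_nonneg_pos)
      then have "(c * K + 1) * u < g"
        using u(2) by (metis pos_less_divide_eq mult.commute)
      then show "c * K * u < g"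
        using u(1) by (simp add: distrib_right)
    qed (use u in simp)
    finally show ?thesis .
  qed
  moreover have "0 < min (g / (c * K + 1)) b"
    using assms(1-4) by (simp add: add_nonneg_pos)
  ultimately show ?thesis
    unfolding eventually_at_right_field by (intro exI[of _ "min (g / (c * K + 1)) b"]) auto
qed

lemma exp_root_iff_centered_cgf:
  fixes P :: "nat pmf" and s n :: nat
  defines "\<mu> \<equiv> measure_pmf.expectation P real"
  assumes "0 \<le> v" "ereal (exp v) < pgf_radius P"
  shows "complex_of_real (exp v) ^ s = pgf P (of_real (exp v)) ^ n
           \<longleftrightarrow> real s * v = real n * (Re (centered_cgf P (of_real v)) + \<mu> * v)"
  using centered_cgf_of_real(2)[OF assms(2,3)]
  by (simp add: \<mu>_def flip: of_real_power exp_of_nat_mult)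

lemma pgf_power_root_in_annulus:
  fixes P :: "nat pmf" and s n :: nat
  defines "\<mu> \<equiv> measure_pmf.expectation P real"
  assumes "0 < b" "ereal (exp b) < pgf_radius P" "real n * \<mu> < real s" "0 \<le> K"
    and quadratic: "\<And>u. 0 \<le> u \<Longrightarrow> u \<le> b \<Longrightarrow> Re (centered_cgf P (of_real u)) \<le> K * u\<^sup>2"
    and above: "real s * b < real n * (Re (centered_cgf P (of_real b)) + \<mu> * b)"
  obtains z where "1 < cmod z" "cmod z < exp b" "ereal (cmod z) < pgf_radius P" "z ^ s = pgf P z ^ n"
proof -
  define d where "d = (\<lambda>u. Re (centered_cgf P (of_real u)))"
  define \<psi> where "\<psi> = (\<lambda>u. (real s - real n * \<mu>) * u - real n * d u)"
  have "eventually (\<lambda>u. real n * d u < (real s - real n * \<mu>) * u) (at_right 0)"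
    using assms(2,4,5) quadratic
    by (intro eventually_quadratic_below_linear_at_right_0) (auto simp: d_def)
  then have "eventually (\<lambda>u. 0 < \<psi> u) (at_right 0)"
    by eventually_elim (simp add: \<psi>_def)
  moreover have "continuous_on {0..b} \<psi>"
    unfolding \<psi>_def d_def by (intro continuous_intros continuous_on_centered_cgf_real assms(3))
  moreover have "\<psi> b < 0" using above by (simp add: \<psi>_def d_def algebra_simps)
  ultimately obtain v where v: "0 < v" "v < b" "\<psi> v = 0"
    using IVT_right_of_0[OF assms(2)] by blast
  have rad: "ereal (exp v) < pgf_radius P"
    using v assms(3) by (meson ereal_less_eq(3) exp_le_cancel_iff less_imp_le order.strict_trans1)
  have root: "complex_of_real (exp v) ^ s = pgf P (of_real (exp v)) ^ n"
    using v(3) exp_root_iff_centered_cgf[of v P s n] v(1) rad by (simp add: \<psi>_def d_def \<mu>_def algebra_simps)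
  show ?thesis
  proof (rule that)
    show "1 < cmod (complex_of_real (exp v))" "cmod (complex_of_real (exp v)) < exp b"
      using v by simp_all
    show "ereal (cmod (complex_of_real (exp v))) < pgf_radius P"
      using rad by simp
  qed (fact root)
qed

lemma minimal_root_is_real:
  fixes P :: "nat pmf" and s n :: nat and Z0 :: complex
  defines "\<mu> \<equiv> measure_pmf.expectation P real"
  assumes dominant: "\<forall>r1 z. 0 < r1 \<and> ereal r1 < pgf_radius P \<and> cmod z = r1 \<and> z \<noteq> complex_of_real r1
                    \<longrightarrow> cmod (pgf P z) < Re (pgf P (complex_of_real r1))"
    and "0 < n" "real n * \<mu> < real s" "0 \<le> K"
    and Z0: "1 < cmod Z0" "ereal (cmod Z0) < pgf_radius P" "Z0 ^ s = pgf P Z0 ^ n"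
    and minimal: "\<And>z. 1 < cmod z \<Longrightarrow> ereal (cmod z) < pgf_radius P \<Longrightarrow> z ^ s = pgf P z ^ n \<Longrightarrow> cmod Z0 \<le> cmod z"
    and quadratic: "\<And>u. 0 \<le> u \<Longrightarrow> u \<le> ln (cmod Z0) \<Longrightarrow> Re (centered_cgf P (of_real u)) \<le> K * u\<^sup>2"
  shows "Z0 = of_real (cmod Z0)"
proof (rule ccontr)
  assume not_real: "Z0 \<noteq> of_real (cmod Z0)"
  define v where "v = ln (cmod Z0)"
  have "0 < cmod Z0" using Z0(1) by linarith
  then have v: "0 < v" "exp v = cmod Z0" using Z0(1) by (simp_all add: v_def ln_gt_zero)
  define F where "F = exp (Re (centered_cgf P (of_real v)) + \<mu> * v)"
  have "cmod (pgf P Z0) < Re (pgf P (of_real (cmod Z0)))"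
    by (rule dominant[rule_format]) (use not_real Z0 in auto)
  also have "\<dots> = F"
    using centered_cgf_of_real(2)[of v P] v Z0(2) by (simp add: F_def \<mu>_def)
  finally have "cmod Z0 ^ s < F ^ n"
    using Z0(3) \<open>0 < n\<close> by (metis norm_ge_zero norm_power power_strict_mono)
  then have "real s * v < real n * (Re (centered_cgf P (of_real v)) + \<mu> * v)"
    by (simp add: F_def flip: v(2) exp_of_nat_mult)
  then obtain z where "1 < cmod z" "cmod z < exp v" "ereal (cmod z) < pgf_radius P" "z ^ s = pgf P z ^ n"
    using pgf_power_root_in_annulus[of v P n s K] v Z0(2) assms(3-5) quadratic
    by (auto simp: \<mu>_def v_def)
  with minimal show False
    using v(2) by fastforce
qed

lemma minimal_root_eq_exp:
  fixes P :: "nat pmf" and s n :: nat and Z0 :: complex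
  defines "\<mu> \<equiv> measure_pmf.expectation P real"
  assumes dominant: "\<forall>r1 z. 0 < r1 \<and> ereal r1 < pgf_radius P \<and> cmod z = r1 \<and> z \<noteq> complex_of_real r1
                    \<longrightarrow> cmod (pgf P z) < Re (pgf P (complex_of_real r1))"
    and sn: "0 < n" "real n * \<mu> < real s"
    and Z0: "1 < cmod Z0" "ereal (cmod Z0) < pgf_radius P" "Z0 ^ s = pgf P Z0 ^ n"
    and minimal: "\<And>z. 1 < cmod z \<Longrightarrow> ereal (cmod z) < pgf_radius P \<Longrightarrow> z ^ s = pgf P z ^ n \<Longrightarrow> cmod Z0 \<le> cmod z"
    and b: "0 < b" "ereal (exp b) < pgf_radius P" "0 \<le> K"
    and quadratic: "\<And>u. 0 \<le> u \<Longrightarrow> u \<le> b \<Longrightarrow> Re (centered_cgf P (of_real u)) \<le> K * u\<^sup>2"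
    and above: "real s * b < real n * (Re (centered_cgf P (of_real b)) + \<mu> * b)"
  obtains v where "0 < v" "v < b" "Z0 = of_real (exp v)"
proof -
  obtain z where z: "1 < cmod z" "cmod z < exp b" "ereal (cmod z) < pgf_radius P" "z ^ s = pgf P z ^ n"
    using pgf_power_root_in_annulus[OF b(1,2) sn(2)[unfolded \<mu>_def] b(3) quadratic above[unfolded \<mu>_def]]
    by blast
  have "cmod Z0 < exp b" using minimal[OF z(1,3,4)] z(2) by linarith
  define v where "v = ln (cmod Z0)"
  have "0 < cmod Z0" using Z0(1) by linarith
  have "ln (cmod Z0) < ln (exp b)"
    using \<open>0 < cmod Z0\<close> \<open>cmod Z0 < exp b\<close> by (subst ln_less_cancel_iff) auto
  then have v: "0 < v" "v < b" "exp v = cmod Z0"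
    using Z0(1) \<open>0 < cmod Z0\<close> by (simp_all add: v_def ln_gt_zero)
  have "Z0 = of_real (cmod Z0)"
  proof (rule minimal_root_is_real[OF dominant sn(1) sn(2)[unfolded \<mu>_def] b(3) Z0 minimal])
    fix u assume "0 \<le> u" "u \<le> ln (cmod Z0)"
    then show "Re (centered_cgf P (of_real u)) \<le> K * u\<^sup>2"
      using quadratic v by (simp add: v_def)
  qed
  then show ?thesis
    using v by (intro that[of v]) (simp_all add: v(3))
qed

lemma deriv_pgf_power_at_real_root:
  fixes P :: "nat pmf" and s n :: nat and v :: real
  defines "\<mu> \<equiv> measure_pmf.expectation P real" and "Z \<equiv> complex_of_real (exp v)"
  assumes "0 \<le> v" "ereal (exp v) < pgf_radius P" "0 < n" "0 < s" and root: "Z ^ s = pgf P Z ^ n"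
  shows "deriv (\<lambda>z. pgf P z ^ n) Z = of_nat n * (deriv (centered_cgf P) (of_real v) + of_real \<mu>) * Z ^ (s - 1)"
proof -
  define W where "W = pgf P Z"
  define G1 where "G1 = eval_fps (fps_deriv (pgf_fps P)) Z"
  have Z: "Z \<noteq> 0" "exp (of_real v) = Z" "ereal (cmod Z) < pgf_radius P"
    using assms(4) by (simp_all add: Z_def exp_of_real)
  have "((\<lambda>z. pgf P z ^ n) has_field_derivative of_nat n * (G1 * W ^ (n - Suc 0))) (at Z)"
    unfolding pgf_eq_eval_fps W_def G1_def
    by (intro DERIV_power has_field_derivative_eval_fps) (simp add: Z_def assms(4))
  then have "Z * deriv (\<lambda>z. pgf P z ^ n) Z = of_nat n * (Z * G1) * W ^ (n - Suc 0)"
    by (simp add: DERIV_imp_deriv algebra_simps)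
  also have "Z * G1 = (deriv (centered_cgf P) (of_real v) + of_real \<mu>) * W"
    using deriv_centered_cgf[of "of_real v" P] centered_cgf_of_real(3)[OF assms(3,4)]
    by (simp add: Z G1_def W_def \<mu>_def)
  also have "of_nat n * ((deriv (centered_cgf P) (of_real v) + of_real \<mu>) * W) * W ^ (n - Suc 0)
      = of_nat n * (deriv (centered_cgf P) (of_real v) + of_real \<mu>) * W ^ n"
    using \<open>0 < n\<close> by (cases n) simp_all
  also have "W ^ n = Z * Z ^ (s - 1)"
    using root \<open>0 < s\<close> by (cases s) (simp_all add: W_def)
  finally have "Z * deriv (\<lambda>z. pgf P z ^ n) Z
      = Z * (of_nat n * (deriv (centered_cgf P) (of_real v) + of_real \<mu>) * Z ^ (s - 1))"
    by (simp add: algebra_simps)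
  then show ?thesis
    using Z(1) by simp
qed

lemma root_quotient_eq:
  fixes P :: "nat pmf" and s n :: nat and v :: real
  defines "\<mu> \<equiv> measure_pmf.expectation P real"
    and "D \<equiv> centered_cgf P (of_real v)" and "D' \<equiv> deriv (centered_cgf P) (of_real v)"
    and "Z \<equiv> complex_of_real (exp v)"
  assumes "0 < v" "ereal (exp v) < pgf_radius P" "0 < n" "0 < s" and root: "Z ^ s = pgf P Z ^ n"
  shows "- (of_nat s - of_real (real n * \<mu>)) / (of_nat s * Z ^ (s - 1) - deriv (\<lambda>z. pgf P z ^ n) Z)
           = (1 / Z) ^ (s - 1) * (D / (of_real v * D' - D))"
proof -
  have "0 \<le> v" using assms(5) by simp
  note real = centered_cgf_of_real[OF this assms(6), folded \<mu>_def D_def]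
  have "real s * v = real n * (Re D + \<mu> * v)"
    using exp_root_iff_centered_cgf[OF \<open>0 \<le> v\<close> assms(6)] root by (simp add: \<mu>_def D_def Z_def)
  then have "real s - real n * \<mu> = real n * Re D / v"
    using assms(5) by (simp add: field_simps)
  then have gap: "of_nat s - of_real (real n * \<mu>) = of_nat n * D / of_real v"
    by (subst real(1)) (metis of_real_divide of_real_diff of_real_mult of_real_of_nat_eq)
  have "of_nat s * Z ^ (s - 1) - deriv (\<lambda>z. pgf P z ^ n) Z
      = Z ^ (s - 1) * ((of_nat s - of_real (real n * \<mu>)) - of_nat n * D')"
    using deriv_pgf_power_at_real_root[OF \<open>0 \<le> v\<close> assms(6-8)] root
    by (simp add: \<mu>_def D'_def Z_def algebra_simps)
  also have "\<dots> = - (Z ^ (s - 1) * of_nat n * (of_real v * D' - D) / of_real v)"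
    unfolding gap using assms(5) by (simp add: field_simps)
  finally have den: "of_nat s * Z ^ (s - 1) - deriv (\<lambda>z. pgf P z ^ n) Z
      = - (Z ^ (s - 1) * of_nat n * (of_real v * D' - D) / of_real v)" .
  show ?thesis
    using assms(5,7) unfolding den gap
    by (cases "of_real v * D' - D = 0") (simp_all add: Z_def field_simps power_one_over)
qed

text \<open>Both D and Q = v D' - D equal \<sigma>2 v^2/2 + O(v^3).\<close>
lemma quotient_near_one:
  fixes D D' :: complex and v \<sigma>2 B :: real
  assumes "0 < v" "0 < \<sigma>2" "B * v \<le> \<sigma>2 / 8"
    and D: "cmod (D - of_real (\<sigma>2 / 2) * (of_real v)\<^sup>2) \<le> B * v ^ 3"
    and D': "cmod (D' - of_real \<sigma>2 * of_real v) \<le> B * v\<^sup>2"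
  shows "cmod (D / (of_real v * D' - D) - 1) \<le> 12 * B / \<sigma>2 * v"
proof -
  define Q where "Q = of_real v * D' - D"
  define e1 where "e1 = D - of_real (\<sigma>2 / 2) * (of_real v)\<^sup>2"
  define e2 where "e2 = D' - of_real \<sigma>2 * of_real v"
  have Q: "of_real (\<sigma>2 * v\<^sup>2 / 2) = Q - of_real v * e2 + e1"
    by (simp add: Q_def e1_def e2_def algebra_simps power2_eq_square)
  have DQ: "D - Q = 2 * e1 - of_real v * e2"
    by (simp add: Q_def e1_def e2_def algebra_simps power2_eq_square)
  have e1: "cmod e1 \<le> B * v ^ 3" using D by (simp add: e1_def)
  have e2: "cmod (of_real v * e2) \<le> B * v ^ 3"
    using mult_left_mono[OF D' less_imp_le[OF assms(1)]] assms(1)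
    by (simp add: e2_def norm_mult power2_eq_square power3_eq_cube mult_ac)
  have "B * v ^ 3 = (B * v) * v\<^sup>2" by (simp add: power2_eq_square power3_eq_cube)
  also have "\<dots> \<le> \<sigma>2 / 8 * v\<^sup>2" using assms(3) by (intro mult_right_mono) auto
  finally have small: "B * v ^ 3 \<le> \<sigma>2 * v\<^sup>2 / 8" by simp
  have "\<sigma>2 * v\<^sup>2 / 2 = cmod (of_real (\<sigma>2 * v\<^sup>2 / 2) :: complex)"
    using assms(2) by (simp only: norm_of_real) simp
  also have "\<dots> \<le> cmod Q + cmod (of_real v * e2) + cmod e1"
    using norm_triangle_ineq[of "Q - of_real v * e2" e1] norm_triangle_ineq4[of Q "of_real v * e2"]
    unfolding Q by linarith
  finally have Q_lower: "\<sigma>2 * v\<^sup>2 / 4 \<le> cmod Q" using e1 e2 small by linarith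
  have "0 < \<sigma>2 * v\<^sup>2 / 4" using assms(1,2) by simp
  then have "Q \<noteq> 0" using Q_lower by auto
  have "cmod (D - Q) \<le> 3 * (B * v ^ 3)"
    using norm_triangle_ineq4[of "2 * e1" "of_real v * e2"] e1 e2 unfolding DQ by simp
  moreover have "D / Q - 1 = (D - Q) / Q" using \<open>Q \<noteq> 0\<close> by (simp add: field_simps)
  ultimately have "cmod (D / Q - 1) \<le> 3 * (B * v ^ 3) / (\<sigma>2 * v\<^sup>2 / 4)"
    using Q_lower \<open>0 < \<sigma>2 * v\<^sup>2 / 4\<close> order_trans[OF norm_ge_zero e1]
    by (simp only: norm_divide) (rule frac_le; simp)
  also have "\<dots> = 12 * B / \<sigma>2 * v"
    using assms(1,2) by (simp add: field_simps power2_eq_square power3_eq_cube)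
  finally show ?thesis by (simp add: Q_def)
qed

lemma Re_bounds_near_quadratic:
  fixes w :: complex and \<sigma>2 B \<delta> u :: real
  assumes "cmod (w - of_real (\<sigma>2 / 2) * (of_real u)\<^sup>2) \<le> B * u ^ 3"
    and "0 \<le> u" "u \<le> \<delta>" "0 \<le> B" "B * \<delta> \<le> \<sigma>2 / 8"
  shows "\<sigma>2 / 4 * u\<^sup>2 \<le> Re w" and "Re w \<le> \<sigma>2 * u\<^sup>2"
proof -
  have "\<bar>Re w - \<sigma>2 / 2 * u\<^sup>2\<bar> \<le> B * u ^ 3"
    using abs_Re_le_cmod[of "w - of_real (\<sigma>2 / 2) * (of_real u)\<^sup>2"] assms(1)
    by (simp flip: of_real_power)
  moreover have "B * u ^ 3 \<le> (B * \<delta>) * u\<^sup>2"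
    using assms(2-4) mult_right_mono[of u \<delta> "B * u\<^sup>2"]
    by (simp add: power2_eq_square power3_eq_cube mult_ac)
  moreover have "(B * \<delta>) * u\<^sup>2 \<le> \<sigma>2 / 8 * u\<^sup>2"
    using assms(5) by (intro mult_right_mono) auto
  moreover have "0 \<le> \<sigma>2"
    using assms(2-5) mult_nonneg_nonneg[of B \<delta>] by linarith
  then have "0 \<le> \<sigma>2 * u\<^sup>2" by simp
  ultimately show "\<sigma>2 / 4 * u\<^sup>2 \<le> Re w" and "Re w \<le> \<sigma>2 * u\<^sup>2"
    by linarith+
qed

lemma minimal_root_quotient_bound:
  fixes P :: "nat pmf" and s n :: nat and Z0 :: complex and \<delta> B u1 :: real
  defines "\<mu> \<equiv> measure_pmf.expectation P real" and "\<sigma>2 \<equiv> measure_pmf.variance P real"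
  assumes dominant: "\<forall>r1 z. 0 < r1 \<and> ereal r1 < pgf_radius P \<and> cmod z = r1 \<and> z \<noteq> complex_of_real r1
                    \<longrightarrow> cmod (pgf P z) < Re (pgf P (complex_of_real r1))"
    and \<sigma>2_pos: "0 < \<sigma>2" and B: "0 \<le> B" "B * \<delta> \<le> \<sigma>2 / 8"
    and exp_\<delta>: "ereal (exp \<delta>) < pgf_radius P"
    and taylor: "\<And>u. 0 \<le> u \<Longrightarrow> u \<le> \<delta> \<Longrightarrow>
      cmod (centered_cgf P (of_real u) - of_real (\<sigma>2 / 2) * (of_real u)\<^sup>2) \<le> B * u ^ 3"
    and taylor': "\<And>u. 0 \<le> u \<Longrightarrow> u \<le> \<delta> \<Longrightarrow>
      cmod (deriv (centered_cgf P) (of_real u) - of_real \<sigma>2 * of_real u) \<le> B * u\<^sup>2"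
    and sn: "0 < s" "0 < n" "real n * \<mu> < real s"
    and Z0: "1 < cmod Z0" "ereal (cmod Z0) < pgf_radius P" "Z0 ^ s = pgf P Z0 ^ n"
    and minimal: "\<And>z. 1 < cmod z \<Longrightarrow> ereal (cmod z) < pgf_radius P \<Longrightarrow> z ^ s = pgf P z ^ n \<Longrightarrow> cmod Z0 \<le> cmod z"
    and u1: "0 < u1" "u1 \<le> \<delta>" "real s * u1 < real n * (Re (centered_cgf P (of_real u1)) + \<mu> * u1)"
  shows "cmod (- (of_nat s - of_real (real n * \<mu>)) / (of_nat s * Z0 ^ (s - 1) - deriv (\<lambda>z. pgf P z ^ n) Z0)
                - (1 / Z0) ^ (s - 1))
         \<le> 12 * B / \<sigma>2 * u1 * cmod ((1 / Z0) ^ (s - 1))"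
proof -
  have exp_u1: "ereal (exp u1) < pgf_radius P"
    using exp_\<delta> u1(2) by (meson ereal_less_eq(3) exp_le_cancel_iff order.strict_trans1)
  have quadratic: "Re (centered_cgf P (of_real u)) \<le> \<sigma>2 * u\<^sup>2" if "0 \<le> u" "u \<le> u1" for u
  proof -
    have "u \<le> \<delta>" using that u1(2) by linarith
    with that(1) show ?thesis by (rule Re_bounds_near_quadratic(2)[OF taylor[OF that(1) \<open>u \<le> \<delta>\<close>] _ _ B])
  qed
  obtain v where v: "0 < v" "v < u1" and Z0_eq: "Z0 = of_real (exp v)"
    using minimal_root_eq_exp[OF dominant sn(2) sn(3)[unfolded \<mu>_def] Z0 minimal u1(1) exp_u1
        less_imp_le[OF \<sigma>2_pos] quadratic u1(3)[unfolded \<mu>_def]] by blast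
  have rad_v: "ereal (exp v) < pgf_radius P"
    using exp_u1 v by (meson ereal_less_eq(3) exp_le_cancel_iff less_imp_le order.strict_trans1)
  define q where "q = centered_cgf P (of_real v)
    / (of_real v * deriv (centered_cgf P) (of_real v) - centered_cgf P (of_real v))"
  have "B * v \<le> B * \<delta>" using B(1) v u1 by (intro mult_left_mono) auto
  then have "cmod (q - 1) \<le> 12 * B / \<sigma>2 * v"
    unfolding q_def using B(2) taylor taylor' v u1 by (intro quotient_near_one[OF v(1) \<sigma>2_pos]) auto
  also have "\<dots> \<le> 12 * B / \<sigma>2 * u1"
    using v B \<sigma>2_pos by (intro mult_left_mono) auto
  finally have q: "cmod (q - 1) \<le> 12 * B / \<sigma>2 * u1" .
  have "- (of_nat s - of_real (real n * \<mu>)) / (of_nat s * Z0 ^ (s - 1) - deriv (\<lambda>z. pgf P z ^ n) Z0)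
        - (1 / Z0) ^ (s - 1) = (1 / Z0) ^ (s - 1) * (q - 1)"
    using root_quotient_eq[of v P n s] v rad_v sn Z0(3)
    unfolding Z0_eq \<mu>_def q_def by (simp add: right_diff_distrib)
  then show ?thesis
    using mult_left_mono[OF q norm_ge_zero[of "(1 / Z0) ^ (s - 1)"]] by (simp add: norm_mult mult.commute)
qed

text \<open>At this scale u of order s^(-1/2), the quadratic gain n d \<ge> n \<sigma>2 u^2/4 beats the linear
  term (s - n\<mu>) u \<le> \<gamma> \<surd>s u; the constant 16 leaves a factor 2 to spare.\<close>
lemma root_condition_at_critical_scale:
  fixes s n \<mu> \<sigma>2 \<gamma> u d :: real
  assumes "0 < \<mu>" "0 < \<sigma>2" "0 < \<gamma>" "2 * \<gamma> \<le> sqrt s" "(1 - n * \<mu> / s) * sqrt s \<le> \<gamma>"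
    and u: "u = 16 * \<mu> * \<gamma> / (\<sigma>2 * sqrt s)" and d: "\<sigma>2 / 4 * u\<^sup>2 \<le> d"
  shows "s * u < n * (d + \<mu> * u)"
proof -
  have sqrt_s: "0 < sqrt s" using assms(3,4) by linarith
  then have "0 < s" by simp
  have "0 < u" using assms(1-3) sqrt_s by (simp add: u)
  have "s - n * \<mu> = (1 - n * \<mu> / s) * sqrt s * sqrt s"
    using \<open>0 < s\<close> by (simp add: field_simps)
  also have "\<dots> \<le> \<gamma> * sqrt s"
    using assms(5) sqrt_s by (intro mult_right_mono) auto
  finally have gap: "s - n * \<mu> \<le> \<gamma> * sqrt s" .
  have "\<gamma> * sqrt s \<le> sqrt s / 2 * sqrt s"
    using assms(4) sqrt_s by (intro mult_right_mono) auto
  then have half: "s / 2 \<le> n * \<mu>" using gap \<open>0 < s\<close> by simp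
  then have "0 < n * \<mu>" using \<open>0 < s\<close> by linarith
  then have "0 \<le> n" using assms(1) by (simp add: zero_less_mult_iff)
  have "s * u - n * \<mu> * u \<le> \<gamma> * sqrt s * u"
    using gap \<open>0 < u\<close> by (simp add: left_diff_distrib[symmetric] mult_right_mono)
  also have "\<dots> < 2 * \<gamma> * sqrt s * u" using assms(3) sqrt_s \<open>0 < u\<close> by simp
  also have "2 * \<gamma> * sqrt s = s / 2 * (\<sigma>2 * u / (4 * \<mu>))"
    using sqrt_s \<open>0 < s\<close> assms(1,2) by (simp add: u field_simps)
  also have "s / 2 * (\<sigma>2 * u / (4 * \<mu>)) * u \<le> n * \<mu> * (\<sigma>2 * u / (4 * \<mu>)) * u"
    using half \<open>0 < u\<close> assms(1,2) by (intro mult_right_mono) auto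
  also have "\<dots> = n * (\<sigma>2 / 4 * u\<^sup>2)" using assms(1) by (simp add: power2_eq_square)
  also have "\<dots> \<le> n * d"
    using d \<open>0 \<le> n\<close> by (rule mult_left_mono)
  finally show ?thesis by (simp add: algebra_simps)
qed

lemma minimal_root_quotient_asymptotics:
  fixes P :: "nat pmf" and \<gamma> :: real
  defines "\<mu> \<equiv> measure_pmf.expectation P real" and "\<sigma>2 \<equiv> measure_pmf.variance P real"
  assumes radius: "pgf_radius P > 1"
    and dominant: "\<forall>r1 z. 0 < r1 \<and> ereal r1 < pgf_radius P \<and> cmod z = r1 \<and> z \<noteq> complex_of_real r1
                    \<longrightarrow> cmod (pgf P z) < Re (pgf P (complex_of_real r1))"
    and \<mu>_pos: "0 < \<mu>" and \<sigma>2_pos: "0 < \<sigma>2" and \<gamma>_pos: "0 < \<gamma>"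
  obtains S0 C where "\<And>s n Z0. S0 \<le> s \<Longrightarrow> 0 < n \<Longrightarrow> real n * \<mu> < real s
      \<Longrightarrow> (1 - real n * \<mu> / real s) * sqrt (real s) \<le> \<gamma>
      \<Longrightarrow> 1 < cmod Z0 \<Longrightarrow> ereal (cmod Z0) < pgf_radius P \<Longrightarrow> Z0 ^ s = pgf P Z0 ^ n
      \<Longrightarrow> (\<And>z. 1 < cmod z \<Longrightarrow> ereal (cmod z) < pgf_radius P \<Longrightarrow> z ^ s = pgf P z ^ n \<Longrightarrow> cmod Z0 \<le> cmod z)
      \<Longrightarrow> cmod (- (of_nat s - of_real (real n * \<mu>)) / (of_nat s * Z0 ^ (s - 1) - deriv (\<lambda>z. pgf P z ^ n) Z0)
                - (1 / Z0) ^ (s - 1))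
          \<le> C / sqrt (real s) * cmod ((1 / Z0) ^ (s - 1))"
proof -
  have "0 < \<sigma>2 / 8" using \<sigma>2_pos by simp
  then obtain \<delta> B where \<delta>: "0 < \<delta>" and B: "0 \<le> B" "B * \<delta> \<le> \<sigma>2 / 8"
    and exp_\<delta>: "ereal (exp \<delta>) < pgf_radius P"
    and T: "\<And>z. cmod z \<le> \<delta> \<Longrightarrow> cmod (centered_cgf P z - of_real (\<sigma>2 / 2) * z\<^sup>2) \<le> B * cmod z ^ 3"
    and T': "\<And>z. cmod z \<le> \<delta> \<Longrightarrow> cmod (deriv (centered_cgf P) z - of_real \<sigma>2 * z) \<le> B * cmod z ^ 2"
    using centered_cgf_Taylor_bounds[OF radius] unfolding \<sigma>2_def by metis
  have taylor: "cmod (centered_cgf P (of_real u) - of_real (\<sigma>2 / 2) * (of_real u)\<^sup>2) \<le> B * u ^ 3"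
    and taylor': "cmod (deriv (centered_cgf P) (of_real u) - of_real \<sigma>2 * of_real u) \<le> B * u\<^sup>2"
    if "0 \<le> u" "u \<le> \<delta>" for u
    using T[of "of_real u"] T'[of "of_real u"] that by simp_all
  define c where "c = 16 * \<mu> * \<gamma> / \<sigma>2"
  have "0 < c" using \<mu>_pos \<gamma>_pos \<sigma>2_pos by (simp add: c_def)
  show ?thesis
  proof (rule that[of "nat \<lceil>(2 * \<gamma> + c / \<delta>)\<^sup>2\<rceil>" "12 * B / \<sigma>2 * c"])
    fix s n :: nat and Z0 :: complex
    assume large: "nat \<lceil>(2 * \<gamma> + c / \<delta>)\<^sup>2\<rceil> \<le> s" and sn: "0 < n" "real n * \<mu> < real s"
      and \<gamma>: "(1 - real n * \<mu> / real s) * sqrt (real s) \<le> \<gamma>"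
      and Z0: "1 < cmod Z0" "ereal (cmod Z0) < pgf_radius P" "Z0 ^ s = pgf P Z0 ^ n"
      and minimal: "\<And>z. 1 < cmod z \<Longrightarrow> ereal (cmod z) < pgf_radius P \<Longrightarrow> z ^ s = pgf P z ^ n \<Longrightarrow> cmod Z0 \<le> cmod z"
    have "2 * \<gamma> + c / \<delta> \<le> sqrt (real s)" using large by (intro real_le_rsqrt) linarith
    moreover have "0 < c / \<delta>" using \<open>0 < c\<close> \<delta> by simp
    ultimately have sqrt_s: "0 < sqrt (real s)" "2 * \<gamma> \<le> sqrt (real s)" "c / \<delta> \<le> sqrt (real s)"
      using \<gamma>_pos by linarith+
    then have "0 < s" by simp
    define u1 where "u1 = c / sqrt (real s)"
    have u1: "0 < u1" "u1 \<le> \<delta>"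
      using \<open>0 < c\<close> sqrt_s \<delta> by (auto simp: u1_def divide_le_eq mult.commute pos_divide_le_eq)
    have "\<sigma>2 / 4 * u1\<^sup>2 \<le> Re (centered_cgf P (of_real u1))"
      using u1 by (intro Re_bounds_near_quadratic(1)[OF taylor _ _ B]) auto
    then have above: "real s * u1 < real n * (Re (centered_cgf P (of_real u1)) + \<mu> * u1)"
      using root_condition_at_critical_scale[OF \<mu>_pos \<sigma>2_pos \<gamma>_pos sqrt_s(2) \<gamma>]
      by (simp add: u1_def c_def)
    have "cmod (- (of_nat s - of_real (real n * \<mu>)) / (of_nat s * Z0 ^ (s - 1) - deriv (\<lambda>z. pgf P z ^ n) Z0)
                - (1 / Z0) ^ (s - 1))
          \<le> 12 * B / \<sigma>2 * u1 * cmod ((1 / Z0) ^ (s - 1))"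
      using minimal_root_quotient_bound[OF dominant _ B(1) B(2)[unfolded \<sigma>2_def] exp_\<delta> _ _ \<open>0 < s\<close> _ _
          Z0 _ u1 above[unfolded \<mu>_def]] \<sigma>2_pos taylor taylor' sn minimal
      unfolding \<mu>_def \<sigma>2_def by blast
    moreover have "12 * B / \<sigma>2 * u1 = 12 * B / \<sigma>2 * c / sqrt (real s)" by (simp add: u1_def)
    ultimately show "cmod (- (of_nat s - of_real (real n * \<mu>)) / (of_nat s * Z0 ^ (s - 1) - deriv (\<lambda>z. pgf P z ^ n) Z0)
                - (1 / Z0) ^ (s - 1))
          \<le> 12 * B / \<sigma>2 * c / sqrt (real s) * cmod ((1 / Z0) ^ (s - 1))"
      by (simp only:)
  qed
qed

theorem lemma3p3:
  fixes P :: "nat pmf" and \<gamma>1 \<gamma>2 :: real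
  assumes radius: "pgf_radius P > 1"
    and mean_pos: "measure_pmf.expectation P real > 0"
    and var_pos: "measure_pmf.variance P real > 0"
    and dominant: "\<forall>r1 z. 0 < r1 \<and> ereal r1 < pgf_radius P \<and> cmod z = r1 \<and> z \<noteq> complex_of_real r1
                    \<longrightarrow> cmod (pgf P z) < Re (pgf P (complex_of_real r1))"
    and gamma_bounds: "0 < \<gamma>1" "\<gamma>1 \<le> \<gamma>2"
  shows "\<exists>C S0. \<forall>(s::nat) (n::nat) (Z0::complex).
      (let \<mu> = measure_pmf.expectation P real;
           A = (\<lambda>z. pgf P z ^ n);
           \<gamma> = (1 - real n * \<mu> / real s) * sqrt (real s)
       in s \<ge> S0 \<and> 0 < s \<and> 0 < n \<and> real n * \<mu> < real s
          \<and> (\<exists>k. real k > real s / real n \<and> pmf P k > 0)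
          \<and> \<gamma>1 \<le> \<gamma> \<and> \<gamma> \<le> \<gamma>2
          \<and> 1 < cmod Z0 \<and> ereal (cmod Z0) < pgf_radius P \<and> Z0 ^ s = A Z0
          \<and> (\<forall>z. 1 < cmod z \<and> ereal (cmod z) < pgf_radius P \<and> z ^ s = A z \<longrightarrow> cmod Z0 \<le> cmod z)
       \<longrightarrow> cmod (- (of_nat s - of_real (real n * \<mu>)) / (of_nat s * Z0 ^ (s - 1) - deriv A Z0)
                   - (1 / Z0) ^ (s - 1))
           \<le> C / sqrt (real s) * cmod ((1 / Z0) ^ (s - 1)))"
proof -
  obtain S0 C where bound: "\<And>s n Z0. S0 \<le> s \<Longrightarrow> 0 < n
      \<Longrightarrow> real n * measure_pmf.expectation P real < real s
      \<Longrightarrow> (1 - real n * measure_pmf.expectation P real / real s) * sqrt (real s) \<le> \<gamma>2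
      \<Longrightarrow> 1 < cmod Z0 \<Longrightarrow> ereal (cmod Z0) < pgf_radius P \<Longrightarrow> Z0 ^ s = pgf P Z0 ^ n
      \<Longrightarrow> (\<And>z. 1 < cmod z \<Longrightarrow> ereal (cmod z) < pgf_radius P \<Longrightarrow> z ^ s = pgf P z ^ n \<Longrightarrow> cmod Z0 \<le> cmod z)
      \<Longrightarrow> cmod (- (of_nat s - of_real (real n * measure_pmf.expectation P real))
                  / (of_nat s * Z0 ^ (s - 1) - deriv (\<lambda>z. pgf P z ^ n) Z0) - (1 / Z0) ^ (s - 1))
          \<le> C / sqrt (real s) * cmod ((1 / Z0) ^ (s - 1))"
    by (rule minimal_root_quotient_asymptotics[OF radius dominant mean_pos var_pos
        order.strict_trans2[OF gamma_bounds]]) blast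
  show ?thesis
    unfolding Let_def
    by (intro exI[of _ C] exI[of _ S0] allI impI, elim conjE, rule bound) (assumption | blast)+
qed

end
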